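(* If $N$ is odd and divisible by $3$, then $\rho(2/3,N)=2/9$.
   Context: For an integer $N\ge 2$ and $f:\mathbb{Z}_N\to\mathbb{C}$, define $\mathbb{E}(f)=\frac1N\sum_{n\in\mathbb{Z}_N} f(n)$ and $\Lambda_3(f)=\frac{1}{N^2}\sum_{n,d\in\mathbb{Z}_N} f(n)f(n+d)f(n+2d)$. For $\upsilon\in(0,1]$, $\rho(\upsilon,N)=\min\{\Lambda_3(f): f:\mathbb{Z}_N\to[0,1],\ \mathbb{E}(f)\ge\upsilon\}$. *)

theory Defs
  imports Complex_Main
begin

text \<open>Z_N is modelled by the residues {0..<N} with arithmetic mod N; a function
  f : Z_N -> C is a function on nat of which only the values on {0..<N} matter.\<close>

definition avgN :: "nat \<Rightarrow> (nat \<Rightarrow> real) \<Rightarrow> real" where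
  "avgN N f = (\<Sum>n<N. f n) / real N"

definition Lambda3 :: "nat \<Rightarrow> (nat \<Rightarrow> real) \<Rightarrow> real" where
  "Lambda3 N f = (\<Sum>n<N. \<Sum>d<N. f n * f ((n + d) mod N) * f ((n + 2 * d) mod N)) / (real N)^2"

definition rho_vals :: "real \<Rightarrow> nat \<Rightarrow> real set" where
  "rho_vals v N = {Lambda3 N f | f. (\<forall>n<N. 0 \<le> f n \<and> f n \<le> 1) \<and> avgN N f \<ge> v}"

text \<open>The paper's minimum; the minimum exists by compactness, so it equals the infimum.\<close>
definition rho :: "real \<Rightarrow> nat \<Rightarrow> real" where
  "rho v N = Inf (rho_vals v N)"

end

(* For a, b, c in [0, 1] one has abc \<ge> c (a + b - 1), the difference being c (1 - a) (1 - b).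
   Apply this to the progression n, n + d, n + 2d and average over n and d: when N is odd, both
   pairs (n, n + 2d) and (n + d, n + 2d) run uniformly over Z_N x Z_N, so
   \<Lambda>\<^sub>3(f) \<ge> 2\<alpha>\<^sup>2 - \<alpha> with \<alpha> = E(f), which is at least 2/9 once \<alpha> \<ge> 2/3.
   When 3 divides N the bound is attained by the indicator of the non-multiples of 3: a progression
   whose difference is not divisible by 3 meets the multiples of 3, and one whose difference is
   divisible by 3 stays in a single residue class. *)

theory Submission
  imports Defs "HOL-Number_Theory.Cong"
begin

lemma sum_mod_affine_reindex:
  fixes h :: "nat \<Rightarrow> 'a::comm_monoid_add"
  assumes "coprime k N"
  shows "(\<Sum>x<N. h ((c + k * x) mod N)) = (\<Sum>m<N. h m)"
proof (cases "N = 0")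
  case False
  define \<sigma> where "\<sigma> x = (c + k * x) mod N" for x
  have "inj_on \<sigma> {..<N}"
  proof (rule inj_onI)
    fix x y assume "x \<in> {..<N}" "y \<in> {..<N}" "\<sigma> x = \<sigma> y"
    then have "[c + k * x = c + k * y] (mod N)" and "x < N" "y < N"
      by (auto simp: \<sigma>_def cong_def)
    then show "x = y"
      using cong_mult_lcancel_nat[OF assms] cong_add_lcancel_nat
      by (simp add: cong_def)
  qed
  moreover have "\<sigma> ` {..<N} \<subseteq> {..<N}"
    using False by (auto simp: \<sigma>_def)
  ultimately have "bij_betw \<sigma> {..<N} {..<N}"
    by (simp add: bij_betw_def endo_inj_surj)
  then show ?thesis
    unfolding \<sigma>_def by (rule sum.reindex_bij_betw)
qed simp

lemma sum_sum_mod_linear: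
  fixes h :: "nat \<Rightarrow> 'a::comm_semiring_1"
  shows "(\<Sum>n<N. \<Sum>d<N. h ((n + j * d) mod N)) = of_nat N * (\<Sum>n<N. h n)"
proof -
  have "(\<Sum>n<N. h ((n + j * d) mod N)) = (\<Sum>n<N. h n)" for d
    using sum_mod_affine_reindex[of 1 N h "j * d"] by (simp add: add.commute)
  then show ?thesis
    by (subst sum.swap) simp
qed

lemma sum_sum_mod_product:
  fixes h :: "nat \<Rightarrow> 'a::comm_semiring_1"
  assumes "coprime k N"
  shows "(\<Sum>n<N. \<Sum>d<N. h ((n + j * d) mod N) * h ((n + (j + k) * d) mod N)) = (\<Sum>n<N. h n)^2"
proof -
  have shift: "(\<Sum>n<N. h ((n + j * d) mod N) * h ((n + (j + k) * d) mod N))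
      = (\<Sum>m<N. h m * h ((m + k * d) mod N))" for d
  proof -
    have "((j * d + 1 * n) mod N + k * d) mod N = (n + (j + k) * d) mod N" for n
      unfolding mod_add_left_eq by (simp add: add.assoc add.left_commute distrib_right)
    then show ?thesis
      using sum_mod_affine_reindex[of 1 N "\<lambda>m. h m * h ((m + k * d) mod N)" "j * d"]
      by (simp add: add.commute)
  qed
  have "(\<Sum>n<N. \<Sum>d<N. h ((n + j * d) mod N) * h ((n + (j + k) * d) mod N))
      = (\<Sum>d<N. \<Sum>m<N. h m * h ((m + k * d) mod N))"
    by (subst sum.swap) (simp add: shift)
  also have "\<dots> = (\<Sum>m<N. h m * (\<Sum>d<N. h ((m + k * d) mod N)))"
    by (subst sum.swap) (simp add: sum_distrib_left)
  also have "\<dots> = (\<Sum>m<N. h m * (\<Sum>n<N. h n))"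
    using sum_mod_affine_reindex[OF assms, of h] by simp
  finally show ?thesis
    by (simp add: power2_eq_square sum_distrib_right)
qed

lemma Lambda3_ge_density:
  fixes f :: "nat \<Rightarrow> real"
  assumes "odd N" and f_range: "\<forall>n<N. 0 \<le> f n \<and> f n \<le> 1"
  shows "avgN N f * (2 * avgN N f - 1) \<le> Lambda3 N f"
proof -
  define S where "S = (\<Sum>n<N. f n)"
  have "N > 0"
    using \<open>odd N\<close> by (cases N) auto
  have "coprime (2::nat) N"
    using \<open>odd N\<close> by simp
  have pointwise: "f ((n + 2 * d) mod N) * (f n + f ((n + d) mod N) - 1)
      \<le> f n * f ((n + d) mod N) * f ((n + 2 * d) mod N)" if "n < N" for n d
  proof -
    have "0 \<le> f ((n + 2 * d) mod N) * (1 - f n) * (1 - f ((n + d) mod N))"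
      using f_range \<open>n < N\<close> \<open>N > 0\<close> by simp
    then show ?thesis
      by (simp add: algebra_simps)
  qed
  have pair_02: "(\<Sum>n<N. \<Sum>d<N. f n * f ((n + 2 * d) mod N)) = S^2"
    using sum_sum_mod_product[OF \<open>coprime 2 N\<close>, of f 0] by (simp add: S_def mult_2)
  have pair_12: "(\<Sum>n<N. \<Sum>d<N. f ((n + d) mod N) * f ((n + 2 * d) mod N)) = S^2"
    using sum_sum_mod_product[of 1 N f 1] by (simp add: S_def mult_2)
  have single_2: "(\<Sum>n<N. \<Sum>d<N. f ((n + 2 * d) mod N)) = real N * S"
    using sum_sum_mod_linear[of f 2 N] by (simp add: S_def)
  have "2 * S^2 - real N * S
      = (\<Sum>n<N. \<Sum>d<N. f n * f ((n + 2 * d) mod N))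
        + (\<Sum>n<N. \<Sum>d<N. f ((n + d) mod N) * f ((n + 2 * d) mod N))
        - (\<Sum>n<N. \<Sum>d<N. f ((n + 2 * d) mod N))"
    by (simp add: pair_02 pair_12 single_2)
  also have "\<dots> = (\<Sum>n<N. \<Sum>d<N. f ((n + 2 * d) mod N) * (f n + f ((n + d) mod N) - 1))"
    by (simp add: algebra_simps sum.distrib sum_subtractf)
  also have "\<dots> \<le> (\<Sum>n<N. \<Sum>d<N. f n * f ((n + d) mod N) * f ((n + 2 * d) mod N))"
    by (intro sum_mono) (simp add: pointwise)
  finally have "S * (2 * S - real N)
      \<le> (\<Sum>n<N. \<Sum>d<N. f n * f ((n + d) mod N) * f ((n + 2 * d) mod N))"
    by (simp add: power2_eq_square right_diff_distrib mult.commute)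
  then show ?thesis
    using \<open>N > 0\<close> by (simp add: Lambda3_def avgN_def S_def divide_simps power2_eq_square)
qed

lemma sum_lessThan_mult3_mod3:
  fixes h :: "nat \<Rightarrow> 'a::comm_semiring_1"
  shows "(\<Sum>n<3 * M. h (n mod 3)) = of_nat M * (h 0 + h 1 + h 2)"
proof (induction M)
  case (Suc M)
  have "{..<3 * Suc M} = insert (3 * M) (insert (3 * M + 1) (insert (3 * M + 2) {..<3 * M}))"
    by auto
  moreover have "Suc (3 * M) mod 3 = 1" "Suc (Suc (3 * M)) mod 3 = 2"
    by presburger+
  ultimately show ?case
    using Suc by (simp add: algebra_simps)
qed simp

definition nonzero_mod3_indicator :: "nat \<Rightarrow> real" where
  "nonzero_mod3_indicator n = of_bool (n mod 3 \<noteq> 0)"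

lemma avgN_nonzero_mod3_indicator:
  assumes "3 dvd N" "N > 0"
  shows "avgN N nonzero_mod3_indicator = 2/3"
  using assms sum_lessThan_mult3_mod3[of "\<lambda>r. of_bool (r \<noteq> 0) :: real"]
  by (auto simp: avgN_def nonzero_mod3_indicator_def)

lemma nonzero_mod3_indicator_progression:
  assumes "3 dvd N"
  shows "nonzero_mod3_indicator n * nonzero_mod3_indicator ((n + d) mod N)
      * nonzero_mod3_indicator ((n + 2 * d) mod N)
    = nonzero_mod3_indicator n * of_bool (d mod 3 = 0)"
proof -
  have residue: "((n + j * d) mod N) mod 3 = (n mod 3 + j * (d mod 3)) mod 3" for j
    using assms by (metis mod_mod_cancel mod_add_right_eq mod_add_left_eq mod_mult_right_eq)
  have "n mod 3 \<in> {0, 1, 2}" "d mod 3 \<in> {0, 1, 2}"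
    by auto
  then show ?thesis
    unfolding nonzero_mod3_indicator_def residue[of 1, simplified] residue[of 2]
    by auto
qed

lemma Lambda3_nonzero_mod3_indicator:
  assumes "3 dvd N" "N > 0"
  shows "Lambda3 N nonzero_mod3_indicator = 2/9"
proof -
  obtain M where M: "N = 3 * M"
    using assms(1) by blast
  have "(\<Sum>n<N. \<Sum>d<N. nonzero_mod3_indicator n * nonzero_mod3_indicator ((n + d) mod N)
          * nonzero_mod3_indicator ((n + 2 * d) mod N))
      = (\<Sum>n<N. nonzero_mod3_indicator n) * (\<Sum>d<N. of_bool (d mod 3 = 0))"
    by (simp only: nonzero_mod3_indicator_progression[OF assms(1)] sum_product)
  also have "\<dots> = 2 * real M * real M"
    using M sum_lessThan_mult3_mod3[of "\<lambda>r. of_bool (r \<noteq> 0) :: real"]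
      sum_lessThan_mult3_mod3[of "\<lambda>r. of_bool (r = 0) :: real"]
    by (simp add: nonzero_mod3_indicator_def)
  finally show ?thesis
    using M assms(2) by (simp add: Lambda3_def power2_eq_square)
qed

theorem mainTheorem10:
  fixes N :: nat
  assumes "N \<ge> 2" and "odd N" and "3 dvd N"
  shows "rho (2/3) N = 2/9"
  unfolding rho_def
proof (rule cInf_eq_minimum)
  have "N > 0"
    using assms(1) by simp
  then show "2/9 \<in> rho_vals (2/3) N"
    unfolding rho_vals_def
    using avgN_nonzero_mod3_indicator[OF assms(3)] Lambda3_nonzero_mod3_indicator[OF assms(3)]
    by (auto simp: nonzero_mod3_indicator_def intro!: exI[of _ nonzero_mod3_indicator])
next
  fix x assume "x \<in> rho_vals (2/3) N"
  then obtain f where "x = Lambda3 N f" and f_range: "\<forall>n<N. 0 \<le> f n \<and> f n \<le> 1"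
    and dense: "avgN N f \<ge> 2/3"
    unfolding rho_vals_def by blast
  have "0 \<le> (avgN N f - 2/3) * (2 * avgN N f + 1/3)"
    using dense by simp
  then have "2/9 \<le> avgN N f * (2 * avgN N f - 1)"
    by (simp add: algebra_simps)
  also have "\<dots> \<le> x"
    using Lambda3_ge_density[OF assms(2) f_range] \<open>x = Lambda3 N f\<close> by simp
  finally show "2/9 \<le> x" .
qed

end
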